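(* Let $(\log\rho_i)_{i\in\mathbb Z}$ be i.i.d. real random variables with $\mathbb P[\log\rho_0>0]>0$ and $\mathbb P[\log\rho_0<0]>0$, and let $V$ be the associated random walk defined below. Let $h>0$. Then the process $\big(V[m_1(h)-k]-V[m_1(h)],\ 0\le k\le m_1(h)-{}^{\uparrow}T_h(h)\big)$ conditioned on $\{{}^{\uparrow}T_h(h)\ge0\}$ has the same law as $\big(V(-k),\ 0\le k\le T_{V(-\cdot)}([h,+\infty[)\big)$ conditioned on $\{T_{V(-\cdot)}([h,+\infty[)<T_{V(-\cdot)}(]-\infty,0])\}$.
   Context: $V(x)=\sum_{k=1}^x\log\rho_k$ for $x>0$, $V(0)=0$, $V(x)=-\sum_{k=x+1}^0\log\rho_k$ for $x<0$. $V^\uparrow(x)=\max_{0\le i\le j\le x}[V(j)-V(i)]$ for $x\in\mathbb N$; $T^\uparrow(h)=\min\{x\ge0:V^\uparrow(x)\ge h\}$; $m_1(h)=\min\{x\ge0:V(x)=\min_{[0,T^\uparrow(h)]}V\}$; ${}^{\uparrow}T_h(y)=\max\{x\in\mathbb Z:x\le m_1(h),\ V(x)-V(m_1(h))\ge y\}$ with $\max\emptyset=-\infty$. For $A\subset\mathbb R$, $T_{V(-\cdot)}(A)=\min\{x\ge1:V(-x)\in A\}$. *)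

theory Defs
  imports "HOL-Probability.Probability"
begin

text \<open>Throughout, r :: int => real plays the role of the environment (log rho_k)_k.\<close>

definition Vw :: "(int \<Rightarrow> real) \<Rightarrow> int \<Rightarrow> real" where
  "Vw r x = (if x > 0 then (\<Sum>k\<in>{1..x}. r k)
             else if x = 0 then 0 else - (\<Sum>k\<in>{x+1..0}. r k))"

definition Vup :: "(int \<Rightarrow> real) \<Rightarrow> nat \<Rightarrow> real" where
  "Vup r x = Max {Vw r (int j) - Vw r (int i) | i j. i \<le> j \<and> j \<le> x}"

text \<open>T^up(h), meaningful when some x has Vup r x >= h (see hasTup).\<close>
definition hasTup :: "(int \<Rightarrow> real) \<Rightarrow> real \<Rightarrow> bool" where
  "hasTup r h = (\<exists>x. Vup r x \<ge> h)"

definition Tup :: "(int \<Rightarrow> real) \<Rightarrow> real \<Rightarrow> nat" where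
  "Tup r h = (LEAST x. Vup r x \<ge> h)"

definition m1 :: "(int \<Rightarrow> real) \<Rightarrow> real \<Rightarrow> nat" where
  "m1 r h = (LEAST x. Vw r (int x) = Min (Vw r ` int ` {0..Tup r h}))"

text \<open>upT r h y = the paper's {}^{up}T_h(y); None encodes -infinity (max of empty set).\<close>
definition upT :: "(int \<Rightarrow> real) \<Rightarrow> real \<Rightarrow> real \<Rightarrow> int option" where
  "upT r h y = (let S = {x::int. x \<le> int (m1 r h) \<and> Vw r x - Vw r (int (m1 r h)) \<ge> y}
                in if S = {} then None else Some (GREATEST x. x \<in> S))"

definition Tneg :: "(int \<Rightarrow> real) \<Rightarrow> real set \<Rightarrow> enat" where
  "Tneg r A = (if \<exists>x::nat. x \<ge> 1 \<and> Vw r (- int x) \<in> A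
               then enat (LEAST x::nat. x \<ge> 1 \<and> Vw r (- int x) \<in> A) else \<infinity>)"

definition event1 :: "(int \<Rightarrow> real) \<Rightarrow> real \<Rightarrow> bool" where
  "event1 r h = (hasTup r h \<and> (\<exists>t. upT r h h = Some t \<and> t \<ge> 0))"

definition len1 :: "(int \<Rightarrow> real) \<Rightarrow> real \<Rightarrow> nat" where
  "len1 r h = nat (int (m1 r h) - the (upT r h h))"

definition path1 :: "(int \<Rightarrow> real) \<Rightarrow> real \<Rightarrow> nat \<Rightarrow> real" where
  "path1 r h k = Vw r (int (m1 r h) - int k) - Vw r (int (m1 r h))"

definition event2 :: "(int \<Rightarrow> real) \<Rightarrow> real \<Rightarrow> bool" where
  "event2 r h = (Tneg r {h..} < Tneg r {..0})"

definition len2 :: "(int \<Rightarrow> real) \<Rightarrow> real \<Rightarrow> nat" where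
  "len2 r h = the_enat (Tneg r {h..})"

definition path2 :: "(int \<Rightarrow> real) \<Rightarrow> nat \<Rightarrow> real" where
  "path2 r k = Vw r (- int k)"

end

(* The event "upT(h) = t >= 0 and m1(h) - upT(h) = n" is
   the intersection of three conditions on disjoint blocks of increments: V has no rise of
   height h on [0, t]; read backwards from t + n, V leaves (0, h) through h at time n, which is
   the second event with T_{V(-.)}([h, oo)) = n; and after t + n, V climbs h above V(t + n)
   without going below it.  Conversely these three conditions force T^up(h), m1(h) and upT(h)
   to take the intended values.  Independence and stationarity of the increments then give
   P(first event, length n, path in B) = c * P(second event, length n, path in B), where
   c = E[T^up(h)] * P(V climbs to h before going negative) depends neither on n nor on B.
   Summing over n gives the same relation between the conditioning events, and c > 0 cancels. *)

theory Submission
  imports Defs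
begin

lemma Vw_eq_sum: "Vw r x = (if 0 \<le> x then (\<Sum>k\<in>{0<..x}. r k) else - (\<Sum>k\<in>{x<..0}. r k))"
proof -
  have "{1..x} = {0<..x}" "{x+1..0} = {x<..0}" for x :: int by auto
  then show ?thesis unfolding Vw_def by auto
qed

lemma sum_greaterThanAtMost_split:
  fixes a b c :: int
  assumes "a \<le> b" "b \<le> c"
  shows "(\<Sum>k\<in>{a<..c}. f k) = (\<Sum>k\<in>{a<..b}. f k) + (\<Sum>k\<in>{b<..c}. f k)"
proof -
  have "{a<..c} = {a<..b} \<union> {b<..c}" using assms by auto
  then show ?thesis by (simp add: sum.union_disjoint)
qed

lemma Vw_diff: "a \<le> b \<Longrightarrow> Vw r b - Vw r a = (\<Sum>k\<in>{a<..b}. r k)"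
  unfolding Vw_eq_sum
  using sum_greaterThanAtMost_split[of a 0 b r] sum_greaterThanAtMost_split[of a b 0 r]
    sum_greaterThanAtMost_split[of 0 a b r]
  by auto

lemma Vw_shift: "Vw (\<lambda>i. r (i + m)) x = Vw r (x + m) - Vw r m"
proof -
  have shift: "(\<Sum>k\<in>{a<..b}. r (k + m)) = (\<Sum>k\<in>{a + m<..b + m}. r k)" for a b
    by (rule sum.reindex_bij_witness[of _ "\<lambda>i. i - m" "\<lambda>i. i + m"]) auto
  show ?thesis
  proof (cases "0 \<le> x")
    case True
    then show ?thesis using Vw_diff[of m "x + m" r] by (simp add: Vw_eq_sum shift)
  next
    case False
    then show ?thesis using Vw_diff[of "x + m" m r] by (simp add: Vw_eq_sum shift)
  qed
qed

lemma Vw_cong: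
  assumes "\<And>k. 0 < k \<and> k \<le> x \<or> x < k \<and> k \<le> 0 \<Longrightarrow> r k = r' k"
  shows "Vw r x = Vw r' x"
  unfolding Vw_def using assms by (auto intro!: sum.cong)

lemma Vw_0 [simp]: "Vw r 0 = 0"
  unfolding Vw_def by simp

lemma finite_rises: "finite {Vw r (int j) - Vw r (int i) | i j. i \<le> j \<and> j \<le> x}"
proof (rule finite_subset)
  show "{Vw r (int j) - Vw r (int i) | i j. i \<le> j \<and> j \<le> x}
      \<subseteq> (\<lambda>(i, j). Vw r (int j) - Vw r (int i)) ` ({..x} \<times> {..x})" by force
qed simp

lemma Vup_ge: "i \<le> j \<Longrightarrow> j \<le> x \<Longrightarrow> Vw r (int j) - Vw r (int i) \<le> Vup r x"
  unfolding Vup_def by (rule Max_ge[OF finite_rises]) blast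

lemma Vup_attained: "\<exists>i j. i \<le> j \<and> j \<le> x \<and> Vup r x = Vw r (int j) - Vw r (int i)"
proof -
  have "Vup r x \<in> {Vw r (int j) - Vw r (int i) | i j. i \<le> j \<and> j \<le> x}"
    unfolding Vup_def by (rule Max_in[OF finite_rises]) blast
  then show ?thesis by blast
qed

lemma le_Vup_iff: "h \<le> Vup r x \<longleftrightarrow> (\<exists>i j. i \<le> j \<and> j \<le> x \<and> h \<le> Vw r (int j) - Vw r (int i))"
  using Vup_attained[of x r] Vup_ge[of _ _ x r] by (metis order_trans)

lemma Vup_less_iff: "Vup r x < h \<longleftrightarrow> (\<forall>j\<le>x. \<forall>i\<le>j. Vw r (int j) - Vw r (int i) < h)"
  using le_Vup_iff[of h r x] by (auto simp: not_le[symmetric])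

lemma Vup_0: "Vup r 0 = 0"
  using Vup_attained[of 0 r] by auto

lemma Vup_cong:
  assumes "\<And>k. 0 < k \<Longrightarrow> k \<le> int x \<Longrightarrow> r k = r' k"
  shows "Vup r x = Vup r' x"
proof -
  have "Vw r (int j) = Vw r' (int j)" if "j \<le> x" for j
    by (rule Vw_cong) (use assms that in auto)
  then show ?thesis unfolding Vup_def by (metis (no_types, opaque_lifting) order_trans)
qed

lemma Tup_rise: "hasTup r h \<Longrightarrow> h \<le> Vup r (Tup r h)"
  unfolding hasTup_def Tup_def by (rule LeastI_ex)

lemma Tup_least: "y < Tup r h \<Longrightarrow> Vup r y < h"
  unfolding Tup_def using not_less_Least[of y "\<lambda>x. h \<le> Vup r x"] by simp

lemma Tup_eqI:
  assumes "h \<le> Vup r T" and "\<And>y. y < T \<Longrightarrow> Vup r y < h"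
  shows "hasTup r h" and "Tup r h = T"
proof -
  show "hasTup r h" unfolding hasTup_def using assms(1) by blast
  have "T \<le> y" if "h \<le> Vup r y" for y
    using assms(2)[of y] that by (meson leI not_le)
  then show "Tup r h = T" unfolding Tup_def using assms(1) by (intro Least_equality)
qed

lemma Tup_rise_ends_at_Tup:
  assumes "hasTup r h"
  obtains i where "i \<le> Tup r h" and "h \<le> Vw r (int (Tup r h)) - Vw r (int i)"
proof -
  obtain i j where ij: "i \<le> j" "j \<le> Tup r h" "h \<le> Vw r (int j) - Vw r (int i)"
    using Tup_rise[OF assms] le_Vup_iff by blast
  have "h \<le> Vup r j" using ij le_Vup_iff by blast
  then have "j = Tup r h" using Tup_least[of j r h] ij(2) by (meson le_neq_implies_less not_le)
  then show ?thesis using that ij by simp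
qed

lemma m1_argmin: "m1 r h \<le> Tup r h \<and> Vw r (int (m1 r h)) = Min (Vw r ` int ` {0..Tup r h})"
proof -
  let ?mn = "Min (Vw r ` int ` {0..Tup r h})"
  have "?mn \<in> Vw r ` int ` {0..Tup r h}" by (rule Min_in) auto
  then obtain x where x: "x \<le> Tup r h" "Vw r (int x) = ?mn" by force
  have "Vw r (int (m1 r h)) = ?mn" unfolding m1_def by (rule LeastI[of _ x]) (fact x(2))
  moreover have "m1 r h \<le> x" unfolding m1_def by (rule Least_le) (fact x(2))
  ultimately show ?thesis using x(1) by simp
qed

lemma m1_le_Tup: "m1 r h \<le> Tup r h"
  using m1_argmin by blast

lemma Vw_m1_le: "y \<le> Tup r h \<Longrightarrow> Vw r (int (m1 r h)) \<le> Vw r (int y)"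
  unfolding m1_argmin[THEN conjunct2] by (rule Min_le) auto

lemma Vw_m1_less:
  assumes "y < m1 r h"
  shows "Vw r (int (m1 r h)) < Vw r (int y)"
proof -
  have "Vw r (int y) \<noteq> Min (Vw r ` int ` {0..Tup r h})"
    using not_less_Least[of y "\<lambda>x. Vw r (int x) = Min (Vw r ` int ` {0..Tup r h})"] assms
    unfolding m1_def by blast
  then have "Vw r (int y) \<noteq> Vw r (int (m1 r h))" using m1_argmin by metis
  moreover have "y \<le> Tup r h" using assms m1_le_Tup[of r h] by linarith
  ultimately show ?thesis using Vw_m1_le[of y r h] by linarith
qed

lemma m1_eqI:
  assumes "m \<le> Tup r h"
    and "\<And>y. y \<le> Tup r h \<Longrightarrow> Vw r (int m) \<le> Vw r (int y)"
    and "\<And>y. y < m \<Longrightarrow> Vw r (int m) < Vw r (int y)"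
  shows "m1 r h = m"
proof -
  have "Min (Vw r ` int ` {0..Tup r h}) = Vw r (int m)"
    by (rule Min_eqI) (use assms(1,2) in auto)
  moreover have "m \<le> y" if "Vw r (int y) = Vw r (int m)" for y
    using assms(3)[of y] that by (cases "y < m") auto
  ultimately show ?thesis unfolding m1_def by (intro Least_equality) auto
qed

lemma int_bounded_has_greatest:
  fixes S :: "int set"
  assumes "x \<in> S" and "\<And>y. y \<in> S \<Longrightarrow> y \<le> b"
  shows "\<exists>g\<in>S. \<forall>y\<in>S. y \<le> g"
proof -
  let ?g = "Max (S \<inter> {x..b})"
  have fin: "finite (S \<inter> {x..b})" by simp
  have x: "x \<in> S \<inter> {x..b}" using assms by auto
  have "y \<le> ?g" if "y \<in> S" for y
  proof (cases "x \<le> y")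
    case True
    then show ?thesis using that assms(2)[OF that] by (intro Max_ge[OF fin]) simp
  next
    case False
    then show ?thesis using Max_ge[OF fin x] by linarith
  qed
  moreover have "?g \<in> S" using Max_in[OF fin] x by blast
  ultimately show ?thesis by blast
qed

lemma upT_eq_Some_iff:
  "upT r h y = Some t \<longleftrightarrow>
     t \<le> int (m1 r h) \<and> y \<le> Vw r t - Vw r (int (m1 r h)) \<and>
     (\<forall>x. t < x \<and> x \<le> int (m1 r h) \<longrightarrow> Vw r x - Vw r (int (m1 r h)) < y)"
proof -
  let ?m = "int (m1 r h)"
  let ?S = "{x. x \<le> ?m \<and> y \<le> Vw r x - Vw r ?m}"
  have upT: "upT r h y = (if ?S = {} then None else Some (GREATEST x. x \<in> ?S))"
    unfolding upT_def Let_def by simp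
  have greatest: "(GREATEST x. x \<in> ?S) = g" if "g \<in> ?S" "\<forall>y\<in>?S. y \<le> g" for g
    by (rule Greatest_equality) (use that in auto)
  show ?thesis
  proof
    assume t: "upT r h y = Some t"
    then obtain x where "x \<in> ?S" using upT by (auto split: if_splits)
    then have "\<exists>g\<in>?S. \<forall>y\<in>?S. y \<le> g" by (rule int_bounded_has_greatest[where b = ?m]) simp_all
    then obtain g where g: "g \<in> ?S" "\<forall>y\<in>?S. y \<le> g" by blast
    then have "t = g" using t greatest upT by (auto split: if_splits)
    moreover have "Vw r x - Vw r ?m < y" if "g < x" "x \<le> ?m" for x
      using g(2) that by force
    ultimately show "t \<le> ?m \<and> y \<le> Vw r t - Vw r ?m \<and> (\<forall>x. t < x \<and> x \<le> ?m \<longrightarrow> Vw r x - Vw r ?m < y)"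
      using g(1) by blast
  next
    assume t: "t \<le> ?m \<and> y \<le> Vw r t - Vw r ?m \<and> (\<forall>x. t < x \<and> x \<le> ?m \<longrightarrow> Vw r x - Vw r ?m < y)"
    then have "\<forall>x\<in>?S. x \<le> t" by force
    then show "upT r h y = Some t" using t upT greatest by auto
  qed
qed

definition exits_upward :: "(int \<Rightarrow> real) \<Rightarrow> real \<Rightarrow> nat \<Rightarrow> bool" where
  "exits_upward r h n \<longleftrightarrow> 1 \<le> n \<and> h \<le> Vw r (- int n) \<and>
     (\<forall>k. 1 \<le> k \<longrightarrow> k < n \<longrightarrow> 0 < Vw r (- int k) \<and> Vw r (- int k) < h)"

definition reaches_before_negative :: "(int \<Rightarrow> real) \<Rightarrow> real \<Rightarrow> bool" where
  "reaches_before_negative r h \<longleftrightarrow> (\<exists>T::nat. h \<le> Vw r (int T) \<and> (\<forall>x\<le>T. 0 \<le> Vw r (int x)))"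

lemma exits_upward_cong:
  assumes "\<And>i. - int n < i \<Longrightarrow> i \<le> 0 \<Longrightarrow> r i = r' i"
  shows "exits_upward r h n = exits_upward r' h n"
    and "restrict (path2 r) {0..n} = restrict (path2 r') {0..n}"
proof -
  have V: "Vw r (- int k) = Vw r' (- int k)" if "k \<le> n" for k
    by (rule Vw_cong) (use assms that in auto)
  show "exits_upward r h n = exits_upward r' h n"
    unfolding exits_upward_def using V by (metis less_or_eq_imp_le order_refl)
  show "restrict (path2 r) {0..n} = restrict (path2 r') {0..n}"
    unfolding path2_def using V by (auto simp: restrict_def)
qed

lemma reaches_before_negative_cong:
  assumes "\<And>i. 0 < i \<Longrightarrow> r i = r' i"
  shows "reaches_before_negative r h = reaches_before_negative r' h"
proof -
  have "Vw r (int k) = Vw r' (int k)" for k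
    by (rule Vw_cong) (use assms in auto)
  then show ?thesis unfolding reaches_before_negative_def by simp
qed

lemma exits_upward_restrict_shift:
  assumes "\<And>i. - int n < i \<Longrightarrow> i \<le> 0 \<Longrightarrow> i + m \<in> K"
  shows "exits_upward (\<lambda>i. restrict x K (i + m)) h n = exits_upward (\<lambda>i. x (i + m)) h n"
    and "restrict (path2 (\<lambda>i. restrict x K (i + m))) {0..n} = restrict (path2 (\<lambda>i. x (i + m))) {0..n}"
  using exits_upward_cong[of n "\<lambda>i. restrict x K (i + m)" "\<lambda>i. x (i + m)"] assms by simp_all

lemma reaches_before_negative_restrict_shift:
  assumes "\<And>i. 0 < i \<Longrightarrow> i + m \<in> K"
  shows "reaches_before_negative (\<lambda>i. restrict x K (i + m)) h = reaches_before_negative (\<lambda>i. x (i + m)) h"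
  using reaches_before_negative_cong[of "\<lambda>i. restrict x K (i + m)" "\<lambda>i. x (i + m)"] assms by simp

lemma Tneg_eq_enat_iff:
  "Tneg r A = enat n \<longleftrightarrow>
     1 \<le> n \<and> Vw r (- int n) \<in> A \<and> (\<forall>k. 1 \<le> k \<longrightarrow> k < n \<longrightarrow> Vw r (- int k) \<notin> A)"
proof
  assume T: "Tneg r A = enat n"
  then have ex: "\<exists>x::nat. 1 \<le> x \<and> Vw r (- int x) \<in> A"
    unfolding Tneg_def by (auto split: if_splits)
  then have "n = (LEAST x::nat. 1 \<le> x \<and> Vw r (- int x) \<in> A)"
    using T unfolding Tneg_def by simp
  then show "1 \<le> n \<and> Vw r (- int n) \<in> A \<and> (\<forall>k. 1 \<le> k \<longrightarrow> k < n \<longrightarrow> Vw r (- int k) \<notin> A)"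
    using LeastI_ex[OF ex] not_less_Least by blast
next
  assume n: "1 \<le> n \<and> Vw r (- int n) \<in> A \<and> (\<forall>k. 1 \<le> k \<longrightarrow> k < n \<longrightarrow> Vw r (- int k) \<notin> A)"
  then have "(LEAST x::nat. 1 \<le> x \<and> Vw r (- int x) \<in> A) = n"
    by (intro Least_equality) (auto intro: leI)
  then show "Tneg r A = enat n" using n unfolding Tneg_def by auto
qed

lemma enat_less_Tneg_iff:
  "enat n < Tneg r A \<longleftrightarrow> (\<forall>k. 1 \<le> k \<longrightarrow> k \<le> n \<longrightarrow> Vw r (- int k) \<notin> A)"
proof (cases "\<exists>x::nat. 1 \<le> x \<and> Vw r (- int x) \<in> A")
  case True
  define L where "L = (LEAST x::nat. 1 \<le> x \<and> Vw r (- int x) \<in> A)"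
  have "Tneg r A = enat L" unfolding Tneg_def L_def using True by simp
  moreover have "1 \<le> L \<and> Vw r (- int L) \<in> A" unfolding L_def by (rule LeastI_ex[OF True])
  moreover have "Vw r (- int k) \<notin> A" if "1 \<le> k" "k < L" for k
    using not_less_Least[of k] that unfolding L_def by blast
  ultimately have "n < L \<longleftrightarrow> (\<forall>k. 1 \<le> k \<longrightarrow> k \<le> n \<longrightarrow> Vw r (- int k) \<notin> A)"
    by (meson le_less_trans not_le)
  then show ?thesis using \<open>Tneg r A = enat L\<close> by simp
next
  case False
  then show ?thesis unfolding Tneg_def by auto
qed

lemma event2_len2_iff:
  assumes "h > 0"
  shows "event2 r h \<and> len2 r h = n \<longleftrightarrow> exits_upward r h n"
proof
  assume e: "event2 r h \<and> len2 r h = n"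
  then have "Tneg r {h..} \<noteq> \<infinity>" unfolding event2_def by (metis enat_ord_simps(6))
  then have "Tneg r {h..} = enat n" using e unfolding len2_def by (cases "Tneg r {h..}") auto
  moreover have "enat n < Tneg r {..0}" using e calculation unfolding event2_def by simp
  ultimately show "exits_upward r h n"
    unfolding exits_upward_def Tneg_eq_enat_iff enat_less_Tneg_iff by force
next
  assume n: "exits_upward r h n"
  then have "Tneg r {h..} = enat n"
    unfolding exits_upward_def Tneg_eq_enat_iff by force
  moreover have "enat n < Tneg r {..0}"
    using n assms unfolding exits_upward_def enat_less_Tneg_iff
    by (metis atMost_iff le_neq_implies_less not_le order.strict_trans1)
  ultimately show "event2 r h \<and> len2 r h = n" unfolding event2_def len2_def by simp
qed

lemma exits_upward_shift_iff:
  assumes "t < m"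
  shows "exits_upward (\<lambda>i. r (i + int m)) h (m - t) \<longleftrightarrow>
    h \<le> Vw r (int t) - Vw r (int m) \<and>
    (\<forall>x. t < x \<longrightarrow> x < m \<longrightarrow> 0 < Vw r (int x) - Vw r (int m) \<and> Vw r (int x) - Vw r (int m) < h)"
proof -
  let ?P = "\<lambda>x. 0 < Vw r (int x) - Vw r (int m) \<and> Vw r (int x) - Vw r (int m) < h"
  have V: "Vw (\<lambda>i. r (i + int m)) (- int k) = Vw r (int (m - k)) - Vw r (int m)" if "k \<le> m" for k
    using that by (simp add: Vw_shift of_nat_diff)
  have "(\<forall>k. 1 \<le> k \<longrightarrow> k < m - t \<longrightarrow> 0 < Vw (\<lambda>i. r (i + int m)) (- int k) \<and> Vw (\<lambda>i. r (i + int m)) (- int k) < h)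
      \<longleftrightarrow> (\<forall>k. 1 \<le> k \<longrightarrow> k < m - t \<longrightarrow> ?P (m - k))"
    using V by force
  also have "\<dots> \<longleftrightarrow> (\<forall>x. t < x \<longrightarrow> x < m \<longrightarrow> ?P x)"
  proof (intro iffI allI impI)
    fix x assume H: "\<forall>k. 1 \<le> k \<longrightarrow> k < m - t \<longrightarrow> ?P (m - k)" and x: "t < x" "x < m"
    have "1 \<le> m - x" "m - x < m - t" "m - (m - x) = x" using x by auto
    then show "?P x" using H by metis
  next
    fix k assume H: "\<forall>x. t < x \<longrightarrow> x < m \<longrightarrow> ?P x" and k: "1 \<le> k" "k < m - t"
    then show "?P (m - k)" using H[rule_format, of "m - k"] by simp
  qed
  finally show ?thesis
    unfolding exits_upward_def using assms V[of "m - t"] by (simp add: Suc_leI)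
qed

lemma reaches_before_negative_shift_iff:
  "reaches_before_negative (\<lambda>i. r (i + int m)) h \<longleftrightarrow>
    (\<exists>T\<ge>m. h \<le> Vw r (int T) - Vw r (int m) \<and> (\<forall>x. m \<le> x \<longrightarrow> x \<le> T \<longrightarrow> Vw r (int m) \<le> Vw r (int x)))"
proof
  assume "reaches_before_negative (\<lambda>i. r (i + int m)) h"
  then obtain T where T: "h \<le> Vw r (int (T + m)) - Vw r (int m)"
    "\<forall>x\<le>T. Vw r (int m) \<le> Vw r (int (x + m))"
    unfolding reaches_before_negative_def Vw_shift by auto
  have "Vw r (int m) \<le> Vw r (int x)" if "m \<le> x" "x \<le> T + m" for x
    using T(2)[rule_format, of "x - m"] that by simp
  then show "\<exists>T\<ge>m. h \<le> Vw r (int T) - Vw r (int m) \<and> (\<forall>x. m \<le> x \<longrightarrow> x \<le> T \<longrightarrow> Vw r (int m) \<le> Vw r (int x))"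
    using T(1) le_add2 by blast
next
  assume "\<exists>T\<ge>m. h \<le> Vw r (int T) - Vw r (int m) \<and> (\<forall>x. m \<le> x \<longrightarrow> x \<le> T \<longrightarrow> Vw r (int m) \<le> Vw r (int x))"
  then obtain T where T: "m \<le> T" "h \<le> Vw r (int T) - Vw r (int m)"
    "\<forall>x. m \<le> x \<longrightarrow> x \<le> T \<longrightarrow> Vw r (int m) \<le> Vw r (int x)" by blast
  have "h \<le> Vw r (int (T - m) + int m) - Vw r (int m)" using T by (simp add: of_nat_diff)
  moreover have "0 \<le> Vw r (int x + int m) - Vw r (int m)" if "x \<le> T - m" for x
    using T(1) T(3)[rule_format, of "x + m"] that by simp
  ultimately show "reaches_before_negative (\<lambda>i. r (i + int m)) h"
    unfolding reaches_before_negative_def Vw_shift by blast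
qed

lemma event1_decompose:
  assumes h: "h > 0" and e: "event1 r h" and t: "upT r h h = Some (int t)"
  defines "m \<equiv> m1 r h"
  shows "t < m" and "Vup r t < h"
    and "exits_upward (\<lambda>i. r (i + int m)) h (m - t)"
    and "reaches_before_negative (\<lambda>i. r (i + int m)) h"
proof -
  have hT: "hasTup r h" using e unfolding event1_def by simp
  have up: "t \<le> m" "h \<le> Vw r (int t) - Vw r (int m)"
    "\<And>x. t < x \<Longrightarrow> x \<le> m \<Longrightarrow> Vw r (int x) - Vw r (int m) < h"
    using t unfolding upT_eq_Some_iff m_def by auto
  show tm: "t < m" using up(1,2) h by (cases "t = m") auto
  show "Vup r t < h" using tm m1_le_Tup[of r h] Tup_least unfolding m_def by fastforce
  show "exits_upward (\<lambda>i. r (i + int m)) h (m - t)"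
    unfolding exits_upward_shift_iff[OF tm] using up Vw_m1_less unfolding m_def by fastforce
  obtain i where i: "i \<le> Tup r h" "h \<le> Vw r (int (Tup r h)) - Vw r (int i)"
    using Tup_rise_ends_at_Tup[OF hT] .
  have "h \<le> Vw r (int (Tup r h)) - Vw r (int m)" using i Vw_m1_le[OF i(1)] unfolding m_def by linarith
  then show "reaches_before_negative (\<lambda>i. r (i + int m)) h"
    unfolding reaches_before_negative_shift_iff m_def using m1_le_Tup Vw_m1_le by blast
qed

lemma Tup_m1_eqI:
  assumes pre: "Vup r t < h" and St: "h \<le> Vw r (int t) - Vw r (int m)"
    and Sx: "\<And>x. t < x \<Longrightarrow> x < m \<Longrightarrow> 0 < Vw r (int x) - Vw r (int m) \<and> Vw r (int x) - Vw r (int m) < h"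
    and T: "m \<le> T" "h \<le> Vw r (int T) - Vw r (int m)"
    and before: "\<And>j. m \<le> j \<Longrightarrow> j < T \<Longrightarrow> Vw r (int j) - Vw r (int m) < h"
    and after: "\<And>x. m \<le> x \<Longrightarrow> x \<le> T \<Longrightarrow> Vw r (int m) \<le> Vw r (int x)"
  shows "hasTup r h" and "Tup r h = T" and "m1 r h = m"
proof -
  have above: "Vw r (int m) < Vw r (int i)" if "i < m" for i
  proof (cases "i \<le> t")
    case True
    then show ?thesis using pre St Vup_ge[OF True order_refl, of r] by linarith
  qed (use Sx that in auto)
  have low: "Vw r (int m) \<le> Vw r (int i)" if "i \<le> T" for i
    using above[of i] after[of i] that by (cases "i < m") auto
  have no_rise: "Vup r y < h" if "y < T" for y
    unfolding Vup_less_iff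
  proof (intro allI impI)
    fix i j assume "j \<le> y" "i \<le> j"
    show "Vw r (int j) - Vw r (int i) < h"
    proof (cases "j \<le> t")
      case True
      then show ?thesis using pre Vup_ge[OF \<open>i \<le> j\<close> True, of r] by linarith
    next
      case False
      then have "Vw r (int j) - Vw r (int m) < h"
        using Sx[of j] before[of j] \<open>j \<le> y\<close> that by (cases "j < m") auto
      then show ?thesis using low[of i] \<open>i \<le> j\<close> \<open>j \<le> y\<close> that by simp
    qed
  qed
  have "h \<le> Vup r T" unfolding le_Vup_iff using T by blast
  then show "hasTup r h" and Tup: "Tup r h = T" using Tup_eqI[of h r T] no_rise by auto
  show "m1 r h = m" by (rule m1_eqI) (use T low above in \<open>simp_all add: Tup\<close>)
qed

lemma event1_compose:
  assumes h: "h > 0" and tm: "t < m" and pre: "Vup r t < h"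
    and exits: "exits_upward (\<lambda>i. r (i + int m)) h (m - t)"
    and reaches: "reaches_before_negative (\<lambda>i. r (i + int m)) h"
  shows "event1 r h" and "upT r h h = Some (int t)" and "m1 r h = m"
proof -
  have St: "h \<le> Vw r (int t) - Vw r (int m)"
    and Sx: "\<And>x. t < x \<Longrightarrow> x < m \<Longrightarrow> 0 < Vw r (int x) - Vw r (int m) \<and> Vw r (int x) - Vw r (int m) < h"
    using exits unfolding exits_upward_shift_iff[OF tm] by auto
  obtain T1 where T1: "m \<le> T1" "h \<le> Vw r (int T1) - Vw r (int m)"
    "\<And>x. m \<le> x \<Longrightarrow> x \<le> T1 \<Longrightarrow> Vw r (int m) \<le> Vw r (int x)"
    using reaches unfolding reaches_before_negative_shift_iff by blast
  \<comment> \<open>The first time after m at which V exceeds V(m) + h; it turns out to be T^up(h).\<close>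
  let ?passed = "\<lambda>T. m \<le> T \<and> h \<le> Vw r (int T) - Vw r (int m)"
  define T where "T = (LEAST T. ?passed T)"
  have "?passed T" unfolding T_def by (rule LeastI[of _ T1]) (use T1 in simp)
  moreover have "T \<le> T1" unfolding T_def by (rule Least_le) (use T1 in simp)
  moreover have "Vw r (int j) - Vw r (int m) < h" if "m \<le> j" "j < T" for j
    using not_less_Least[of j ?passed] that unfolding T_def by auto
  ultimately have hT: "hasTup r h" and m1: "m1 r h = m"
    using Tup_m1_eqI[OF pre St Sx, of T] T1(3) by auto
  have "Vw r x - Vw r (int m) < h" if "int t < x" "x \<le> int m" for x
  proof (cases "x = int m")
    case False
    then have "x = int (nat x)" "t < nat x" "nat x < m" using that by auto
    then show ?thesis using Sx[of "nat x"] by metis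
  qed (use h in simp)
  then show upT: "upT r h h = Some (int t)"
    unfolding upT_eq_Some_iff m1 using tm St by auto
  show "event1 r h" unfolding event1_def using hT upT by simp
  show "m1 r h = m" by (fact m1)
qed

lemma event1_upT_nat: "event1 r h \<Longrightarrow> \<exists>t::nat. upT r h h = Some (int t)"
  unfolding event1_def by (metis nonneg_int_cases)

lemma path1_eq_path2_shift: "path1 r h = path2 (\<lambda>i. r (i + int (m1 r h)))"
  by (simp add: path1_def path2_def Vw_shift fun_eq_iff)

lemma event1_path_iff:
  fixes r :: "int \<Rightarrow> real" and t n :: nat
  assumes "h > 0"
  defines "r' \<equiv> \<lambda>i. r (i + int (t + n))"
  shows "event1 r h \<and> upT r h h = Some (int t) \<and> len1 r h = n \<and> restrict (path1 r h) {0..n} \<in> B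
    \<longleftrightarrow> Vup r t < h \<and> exits_upward r' h n \<and> restrict (path2 r') {0..n} \<in> B
        \<and> reaches_before_negative r' h"
proof
  assume e: "event1 r h \<and> upT r h h = Some (int t) \<and> len1 r h = n \<and> restrict (path1 r h) {0..n} \<in> B"
  then have ev: "event1 r h" and up: "upT r h h = Some (int t)" by auto
  note parts = event1_decompose[OF assms(1) ev up]
  have m1: "m1 r h = t + n" using parts(1) e unfolding len1_def by auto
  show "Vup r t < h \<and> exits_upward r' h n \<and> restrict (path2 r') {0..n} \<in> B \<and> reaches_before_negative r' h"
    using parts e path1_eq_path2_shift[of r h] unfolding m1 r'_def by simp
next
  assume b: "Vup r t < h \<and> exits_upward r' h n \<and> restrict (path2 r') {0..n} \<in> B \<and> reaches_before_negative r' h"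
  then have "t < t + n" unfolding exits_upward_def by simp
  note composed = event1_compose[OF assms(1) this, of r]
  have m1: "m1 r h = t + n" using composed b unfolding r'_def by simp
  show "event1 r h \<and> upT r h h = Some (int t) \<and> len1 r h = n \<and> restrict (path1 r h) {0..n} \<in> B"
    using composed b path1_eq_path2_shift[of r h] unfolding len1_def m1 r'_def by simp
qed

lemma measurable_component_PiM_any [measurable]:
  "(\<lambda>x. x k) \<in> borel_measurable (PiM I (\<lambda>_. (borel :: real measure)))"
proof (cases "k \<in> I")
  case True
  then show ?thesis by (rule measurable_component_singleton)
next
  case False
  then have "\<And>x. x \<in> space (PiM I (\<lambda>_. borel)) \<Longrightarrow> x k = undefined"
    by (auto simp: space_PiM PiE_def extensional_def)
  then show ?thesis by (subst measurable_cong[where g = "\<lambda>_. undefined"]) auto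
qed

lemma measurable_Vw [measurable]:
  "(\<lambda>x. Vw x j) \<in> borel_measurable (PiM I (\<lambda>_. (borel :: real measure)))"
  unfolding Vw_def by measurable

lemma measurable_Vup_less [measurable]:
  "Measurable.pred (PiM I (\<lambda>_. (borel :: real measure))) (\<lambda>x. Vup x t < h)"
  unfolding Vup_less_iff by measurable

lemma measurable_exits_upward [measurable]:
  "Measurable.pred (PiM I (\<lambda>_. (borel :: real measure))) (\<lambda>x. exits_upward (\<lambda>i. x (i + m)) h n)"
  unfolding exits_upward_def Vw_shift by measurable

lemma measurable_path2 [measurable]:
  "(\<lambda>x. restrict (path2 (\<lambda>i. x (i + m))) {0..n})
     \<in> measurable (PiM I (\<lambda>_. (borel :: real measure))) (PiM {0..n} (\<lambda>_. borel))"
  unfolding path2_def Vw_shift by measurable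

lemma measurable_reaches_before_negative [measurable]:
  "Measurable.pred (PiM I (\<lambda>_. (borel :: real measure))) (\<lambda>x. reaches_before_negative (\<lambda>i. x (i + m)) h)"
  unfolding reaches_before_negative_def Vw_shift by measurable

lemmas measurable_exits_upward_0 [measurable] = measurable_exits_upward[where m = 0, simplified]
lemmas measurable_path2_0 [measurable] = measurable_path2[where m = 0, simplified]
lemmas measurable_reaches_before_negative_0 [measurable] =
  measurable_reaches_before_negative[where m = 0, simplified]

lemma (in prob_space) indep_sets_reindex:
  assumes "inj_on f I" and "indep_sets F (f ` I)"
  shows "indep_sets (\<lambda>i. F (f i)) I"
  unfolding indep_sets_def
proof (intro conjI ballI allI impI)
  fix i assume "i \<in> I"
  then show "F (f i) \<subseteq> events" using assms(2) unfolding indep_sets_def by blast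
next
  fix J A assume J: "J \<subseteq> I" "J \<noteq> {}" "finite J" and A: "A \<in> Pi J (\<lambda>i. F (f i))"
  have inj: "inj_on f J" using assms(1) J(1) by (rule inj_on_subset)
  let ?A = "\<lambda>k. A (the_inv_into J f k)"
  have A_inv: "?A (f j) = A j" if "j \<in> J" for j using the_inv_into_f_f[OF inj that] by simp
  have "prob (\<Inter>k\<in>f ` J. ?A k) = (\<Prod>k\<in>f ` J. prob (?A k))"
    by (rule indep_setsD[OF assms(2)]) (use J A A_inv in auto)
  then show "prob (\<Inter>j\<in>J. A j) = (\<Prod>j\<in>J. prob (A j))"
    using A_inv by (simp add: prod.reindex[OF inj])
qed

lemma (in prob_space) indep_vars_reindex:
  assumes "inj_on f I" and "indep_vars M' X (f ` I)"
  shows "indep_vars (\<lambda>i. M' (f i)) (\<lambda>i. X (f i)) I"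
  using assms indep_sets_reindex[OF assms(1), of "\<lambda>i. {X i -` A \<inter> space M | A. A \<in> sets (M' i)}"]
  unfolding indep_vars_def2 by auto

lemma (in prob_space) exists_pos_level:
  fixes Y :: "'a \<Rightarrow> real"
  assumes [measurable]: "Y \<in> borel_measurable M" and pos: "0 < prob {\<omega>\<in>space M. 0 < Y \<omega>}"
  obtains c where "0 < c" and "0 < prob {\<omega>\<in>space M. c < Y \<omega>}"
proof -
  let ?A = "\<lambda>k::nat. {\<omega>\<in>space M. inverse (real (Suc k)) < Y \<omega>}"
  have "{\<omega>\<in>space M. 0 < Y \<omega>} = (\<Union>k. ?A k)"
  proof (intro equalityI subsetI)
    fix \<omega> assume "\<omega> \<in> {\<omega>\<in>space M. 0 < Y \<omega>}"
    then obtain k where "\<omega> \<in> space M" "inverse (real (Suc k)) < Y \<omega>"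
      using reals_Archimedean[of "Y \<omega>"] by auto
    then show "\<omega> \<in> (\<Union>k. ?A k)" by blast
  next
    fix \<omega> assume "\<omega> \<in> (\<Union>k. ?A k)"
    then show "\<omega> \<in> {\<omega>\<in>space M. 0 < Y \<omega>}"
      by (auto intro: less_trans[of 0 "inverse (real (Suc _))"])
  qed
  moreover have "range ?A \<subseteq> sets M" by auto
  ultimately have "\<exists>k. emeasure M (?A k) \<noteq> 0"
    using pos emeasure_UN_eq_0[of M ?A] by (auto simp: emeasure_eq_measure)
  then obtain k where "emeasure M (?A k) \<noteq> 0" by blast
  then show ?thesis
    using that[of "inverse (real (Suc k))"] by (simp add: emeasure_eq_measure zero_less_measure_iff)
qed

lemma (in finite_measure) measure_ratio_eq:
  assumes A: "emeasure M A = c * emeasure M C" and A': "emeasure M A' = c * emeasure M C'"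
    and "C \<subseteq> C'" and "C' \<in> sets M" and "0 < c"
  shows "measure M A / measure M A' = measure M C / measure M C'"
proof (cases "emeasure M C' = 0")
  case True
  then have "emeasure M C = 0" using emeasure_mono[OF assms(3,4)] by simp
  then show ?thesis using A by (simp add: measure_def)
next
  case False
  then have "c \<noteq> \<top>" using A' emeasure_finite[of A'] by (auto simp: ennreal_top_mult)
  then obtain k where k: "c = ennreal k" "0 < k" using \<open>0 < c\<close> by (cases c) auto
  have "measure M A = k * measure M C" "measure M A' = k * measure M C'"
    using A A' k by (simp_all add: measure_def enn2real_mult)
  then show ?thesis using k(2) by simp
qed

locale iid_walk = prob_space M for M :: "'a measure" +
  fixes X :: "int \<Rightarrow> 'a \<Rightarrow> real"
  assumes indep: "indep_vars (\<lambda>_. borel) X UNIV"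
    and ident: "\<And>i. distr M borel (X i) = distr M borel (X 0)"
begin

lemma measurable_X [measurable]: "X i \<in> borel_measurable M"
  using indep unfolding indep_vars_def by auto

lemma distr_shifted_restrict:
  assumes "I \<noteq> {}"
  shows "distr M (PiM I (\<lambda>_. borel)) (\<lambda>\<omega>. \<lambda>i\<in>I. X (i + m) \<omega>) = PiM I (\<lambda>_. distr M borel (X 0))"
proof -
  have "indep_vars (\<lambda>_. borel) (\<lambda>i. X (i + m)) UNIV"
    using indep_vars_reindex[of "\<lambda>i. i + m" UNIV "\<lambda>_. borel" X] indep
    by (simp add: surj_plus)
  then have "indep_vars (\<lambda>_. borel) (\<lambda>i. X (i + m)) I"
    by (rule indep_vars_subset) simp
  then have "distr M (PiM I (\<lambda>_. borel)) (\<lambda>\<omega>. \<lambda>i\<in>I. X (i + m) \<omega>) = PiM I (\<lambda>i. distr M borel (X (i + m)))"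
    by (subst indep_vars_iff_distr_eq_PiM[OF assms, symmetric]) simp_all
  also have "\<dots> = PiM I (\<lambda>_. distr M borel (X 0))"
    by (rule PiM_cong) (rule refl, rule ident)
  finally show ?thesis .
qed

lemma measurable_walk [measurable]: "(\<lambda>\<omega> i. X i \<omega>) \<in> measurable M (PiM UNIV (\<lambda>_. borel))"
proof -
  have "(\<lambda>\<omega>. \<lambda>i\<in>UNIV. X i \<omega>) \<in> measurable M (PiM UNIV (\<lambda>_. borel))"
    by (rule measurable_restrict) simp
  then show ?thesis by (simp add: restrict_UNIV)
qed

lemma emeasure_shift_invariant:
  assumes "K \<noteq> {}" and "Measurable.pred (PiM K (\<lambda>_. borel)) P" and "\<And>x. P (restrict x K) = P x"
  shows "emeasure M {\<omega>\<in>space M. P (\<lambda>i. X (i + m) \<omega>)} = emeasure M {\<omega>\<in>space M. P (\<lambda>i. X i \<omega>)}"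
proof -
  let ?Q = "{x\<in>space (PiM K (\<lambda>_. borel)). P x}"
  have Q: "?Q \<in> sets (PiM K (\<lambda>_. borel))" using assms(2) by measurable
  have "emeasure M {\<omega>\<in>space M. P (\<lambda>i. X (i + m') \<omega>)} = emeasure (PiM K (\<lambda>_. distr M borel (X 0))) ?Q" for m'
  proof -
    have f: "(\<lambda>\<omega>. \<lambda>i\<in>K. X (i + m') \<omega>) \<in> measurable M (PiM K (\<lambda>_. borel))"
      by (rule measurable_restrict) simp
    have "{\<omega>\<in>space M. P (\<lambda>i. X (i + m') \<omega>)} = (\<lambda>\<omega>. \<lambda>i\<in>K. X (i + m') \<omega>) -` ?Q \<inter> space M"
      using assms(3) by (auto simp: space_PiM)
    then show ?thesis
      using emeasure_distr[OF f Q] distr_shifted_restrict[OF assms(1)] by simp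
  qed
  from this[of m] this[of 0] show ?thesis by simp
qed

lemma emeasure_indep_blocks:
  assumes disj: "I \<inter> J = {}" "I \<inter> K = {}" "J \<inter> K = {}"
    and meas: "Measurable.pred (PiM I (\<lambda>_. borel)) P" "Measurable.pred (PiM J (\<lambda>_. borel)) Q"
      "Measurable.pred (PiM K (\<lambda>_. borel)) R"
    and local: "\<And>x. P (restrict x I) = P x" "\<And>x. Q (restrict x J) = Q x"
      "\<And>x. R (restrict x K) = R x"
  shows "emeasure M {\<omega>\<in>space M. P (\<lambda>i. X i \<omega>) \<and> Q (\<lambda>i. X i \<omega>) \<and> R (\<lambda>i. X i \<omega>)}
    = emeasure M {\<omega>\<in>space M. P (\<lambda>i. X i \<omega>)} * emeasure M {\<omega>\<in>space M. Q (\<lambda>i. X i \<omega>)}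
      * emeasure M {\<omega>\<in>space M. R (\<lambda>i. X i \<omega>)}"
proof -
  define Ks :: "nat \<Rightarrow> int set" where "Ks j = (if j = 0 then I else if j = 1 then J else K)" for j
  define Ps :: "nat \<Rightarrow> (int \<Rightarrow> real) \<Rightarrow> bool" where "Ps j = (if j = 0 then P else if j = 1 then Q else R)" for j
  let ?Y = "\<lambda>j \<omega>. \<lambda>i\<in>Ks j. X i \<omega>"
  let ?S = "\<lambda>j. {x\<in>space (PiM (Ks j) (\<lambda>_. borel)). Ps j x}"
  let ?E = "\<lambda>j. {\<omega>\<in>space M. Ps j (\<lambda>i. X i \<omega>)}"
  have "indep_vars (\<lambda>j. PiM (Ks j) (\<lambda>_. borel)) ?Y {0, 1, 2}"
    by (rule indep_vars_restrict[OF indep]) (use disj in \<open>auto simp: disjoint_family_on_def Ks_def\<close>)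
  then have "prob (\<Inter>j\<in>{0, 1, 2}. ?Y j -` ?S j \<inter> space M) = (\<Prod>j\<in>{0, 1, 2}. prob (?Y j -` ?S j \<inter> space M))"
    by (rule indep_varsD) (use meas in \<open>auto simp: Ks_def Ps_def\<close>)
  moreover have Y: "?Y j -` ?S j \<inter> space M = ?E j" for j
    using local by (auto simp: Ks_def Ps_def space_PiM)
  ultimately have "prob (\<Inter>j\<in>{0, 1, 2}. ?E j) = (\<Prod>j\<in>{0, 1, 2}. prob (?E j))"
    by (simp only: Y)
  then have "prob (?E 0 \<inter> ?E 1 \<inter> ?E 2) = prob (?E 0) * prob (?E 1) * prob (?E 2)"
    by (simp add: Int_assoc mult.assoc)
  moreover have "?E 0 \<inter> ?E 1 \<inter> ?E 2 = {\<omega>\<in>space M. P (\<lambda>i. X i \<omega>) \<and> Q (\<lambda>i. X i \<omega>) \<and> R (\<lambda>i. X i \<omega>)}"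
    by (auto simp: Ps_def)
  ultimately show ?thesis
    by (simp add: emeasure_eq_measure ennreal_mult[symmetric] Ps_def)
qed

text \<open>The first factor is E[T^up(h)], since V^up(t) < h iff t < T^up(h).\<close>

definition conditioning_factor :: "real \<Rightarrow> ennreal" where
  "conditioning_factor h = (\<Sum>t. emeasure M {\<omega>\<in>space M. Vup (\<lambda>i. X i \<omega>) t < h})
     * emeasure M {\<omega>\<in>space M. reaches_before_negative (\<lambda>i. X i \<omega>) h}"

lemma emeasure_exits_upward_shift:
  assumes [measurable]: "B \<in> sets (PiM {0..n} (\<lambda>_. borel))"
  shows "emeasure M {\<omega>\<in>space M. exits_upward (\<lambda>i. X (i + m) \<omega>) h n
             \<and> restrict (path2 (\<lambda>i. X (i + m) \<omega>)) {0..n} \<in> B}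
    = emeasure M {\<omega>\<in>space M. exits_upward (\<lambda>i. X i \<omega>) h n \<and> restrict (path2 (\<lambda>i. X i \<omega>)) {0..n} \<in> B}"
proof (rule emeasure_shift_invariant[where K = "{- int n..0}"])
  show "Measurable.pred (PiM {- int n..0} (\<lambda>_. borel)) (\<lambda>x. exits_upward x h n \<and> restrict (path2 x) {0..n} \<in> B)"
    by measurable
  show "(exits_upward (restrict x {- int n..0}) h n \<and> restrict (path2 (restrict x {- int n..0})) {0..n} \<in> B)
      = (exits_upward x h n \<and> restrict (path2 x) {0..n} \<in> B)" for x
    using exits_upward_cong[of n "restrict x {- int n..0}" x] by simp
qed simp

lemma emeasure_reaches_before_negative_shift:
  "emeasure M {\<omega>\<in>space M. reaches_before_negative (\<lambda>i. X (i + m) \<omega>) h}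
    = emeasure M {\<omega>\<in>space M. reaches_before_negative (\<lambda>i. X i \<omega>) h}"
proof (rule emeasure_shift_invariant[where K = "{0<..}"])
  show "reaches_before_negative (restrict x {0<..}) h = reaches_before_negative x h" for x
    using reaches_before_negative_cong[of "restrict x {0<..}" x] by simp
qed (auto intro: exI[of _ 1])

lemma emeasure_split_blocks:
  fixes t n :: nat
  assumes [measurable]: "B \<in> sets (PiM {0..n} (\<lambda>_. borel))"
  defines "s \<equiv> int (t + n)"
  shows "emeasure M {\<omega>\<in>space M. Vup (\<lambda>i. X i \<omega>) t < h
             \<and> (exits_upward (\<lambda>i. X (i + s) \<omega>) h n \<and> restrict (path2 (\<lambda>i. X (i + s) \<omega>)) {0..n} \<in> B)
             \<and> reaches_before_negative (\<lambda>i. X (i + s) \<omega>) h}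
    = emeasure M {\<omega>\<in>space M. Vup (\<lambda>i. X i \<omega>) t < h}
      * emeasure M {\<omega>\<in>space M. exits_upward (\<lambda>i. X i \<omega>) h n \<and> restrict (path2 (\<lambda>i. X i \<omega>)) {0..n} \<in> B}
      * emeasure M {\<omega>\<in>space M. reaches_before_negative (\<lambda>i. X i \<omega>) h}"
proof -
  have "Vup (restrict x {0<..int t}) t = Vup x t" for x
    by (rule Vup_cong) simp
  moreover have "\<And>i. - int n < i \<Longrightarrow> i \<le> 0 \<Longrightarrow> i + s \<in> {int t<..s}" "\<And>i. 0 < i \<Longrightarrow> i + s \<in> {s<..}"
    unfolding s_def by auto
  ultimately show ?thesis
    unfolding emeasure_exits_upward_shift[OF assms(1), of s, symmetric]
      emeasure_reaches_before_negative_shift[of s, symmetric]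
    by (intro emeasure_indep_blocks[where I = "{0<..int t}" and J = "{int t<..s}" and K = "{s<..}"])
      (auto simp: s_def exits_upward_restrict_shift reaches_before_negative_restrict_shift
        simp del: restrict_apply)
qed

lemma emeasure_event1_path:
  assumes h: "h > 0" and B: "B \<in> sets (PiM {0..n} (\<lambda>_. borel))"
  shows "{\<omega>\<in>space M. event1 (\<lambda>i. X i \<omega>) h \<and> len1 (\<lambda>i. X i \<omega>) h = n
            \<and> restrict (path1 (\<lambda>i. X i \<omega>) h) {0..n} \<in> B} \<in> sets M" (is "?E1 \<in> _")
    and "emeasure M {\<omega>\<in>space M. event1 (\<lambda>i. X i \<omega>) h \<and> len1 (\<lambda>i. X i \<omega>) h = n
            \<and> restrict (path1 (\<lambda>i. X i \<omega>) h) {0..n} \<in> B}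
      = conditioning_factor h * emeasure M {\<omega>\<in>space M. event2 (\<lambda>i. X i \<omega>) h
            \<and> len2 (\<lambda>i. X i \<omega>) h = n \<and> restrict (path2 (\<lambda>i. X i \<omega>)) {0..n} \<in> B}"
proof -
  note B [measurable]
  define F where "F t = {\<omega>\<in>space M. Vup (\<lambda>i. X i \<omega>) t < h
      \<and> (exits_upward (\<lambda>i. X (i + int (t + n)) \<omega>) h n
           \<and> restrict (path2 (\<lambda>i. X (i + int (t + n)) \<omega>)) {0..n} \<in> B)
      \<and> reaches_before_negative (\<lambda>i. X (i + int (t + n)) \<omega>) h}" for t
  have F_sets: "F t \<in> sets M" for t
    unfolding F_def using measurable_walk by measurable
  have F_eq: "F t = {\<omega>\<in>space M. event1 (\<lambda>i. X i \<omega>) h \<and> upT (\<lambda>i. X i \<omega>) h h = Some (int t)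
      \<and> len1 (\<lambda>i. X i \<omega>) h = n \<and> restrict (path1 (\<lambda>i. X i \<omega>) h) {0..n} \<in> B}" for t
    by (rule set_eqI) (simp add: F_def event1_path_iff[OF h])
  have E1: "?E1 = (\<Union>t. F t)"
  proof (intro equalityI subsetI)
    fix \<omega> assume \<omega>: "\<omega> \<in> ?E1"
    then obtain t where "upT (\<lambda>i. X i \<omega>) h h = Some (int t)" using event1_upT_nat by blast
    with \<omega> show "\<omega> \<in> (\<Union>t. F t)" unfolding F_eq by blast
  qed (auto simp: F_eq)
  have "disjoint_family F"
    unfolding disjoint_family_on_def F_eq by auto
  have E2: "{\<omega>\<in>space M. event2 (\<lambda>i. X i \<omega>) h \<and> len2 (\<lambda>i. X i \<omega>) h = n
        \<and> restrict (path2 (\<lambda>i. X i \<omega>)) {0..n} \<in> B}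
      = {\<omega>\<in>space M. exits_upward (\<lambda>i. X i \<omega>) h n \<and> restrict (path2 (\<lambda>i. X i \<omega>)) {0..n} \<in> B}"
    by (simp only: conj_assoc[symmetric] event2_len2_iff[OF h])
  show "?E1 \<in> sets M" unfolding E1 using F_sets by blast
  have "emeasure M ?E1 = (\<Sum>t. emeasure M (F t))"
    unfolding E1 by (rule suminf_emeasure[symmetric]) (use F_sets \<open>disjoint_family F\<close> in auto)
  then show "emeasure M ?E1 = conditioning_factor h * emeasure M {\<omega>\<in>space M. event2 (\<lambda>i. X i \<omega>) h
            \<and> len2 (\<lambda>i. X i \<omega>) h = n \<and> restrict (path2 (\<lambda>i. X i \<omega>)) {0..n} \<in> B}"
    unfolding F_def emeasure_split_blocks[OF B] E2 conditioning_factor_def by (simp add: ac_simps)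
qed

lemma sets_event2_path:
  assumes h: "h > 0" and B: "B \<in> sets (PiM {0..n} (\<lambda>_. borel))"
  shows "{\<omega>\<in>space M. event2 (\<lambda>i. X i \<omega>) h \<and> len2 (\<lambda>i. X i \<omega>) h = n
           \<and> restrict (path2 (\<lambda>i. X i \<omega>)) {0..n} \<in> B} \<in> sets M"
proof -
  have "Measurable.pred (PiM UNIV (\<lambda>_. borel)) (\<lambda>x. exits_upward x h n \<and> restrict (path2 x) {0..n} \<in> B)"
    using B by measurable
  from measurable_compose[OF measurable_walk this]
  have "{\<omega>\<in>space M. exits_upward (\<lambda>i. X i \<omega>) h n \<and> restrict (path2 (\<lambda>i. X i \<omega>)) {0..n} \<in> B} \<in> sets M"
    by (simp add: pred_def)
  then show ?thesis by (simp only: conj_assoc[symmetric] event2_len2_iff[OF h])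
qed

lemma sets_event2:
  assumes h: "h > 0"
  shows "{\<omega>\<in>space M. event2 (\<lambda>i. X i \<omega>) h} \<in> sets M"
proof -
  have "Measurable.pred (PiM UNIV (\<lambda>_. borel)) (\<lambda>x. \<exists>n. exits_upward x h n)"
    by measurable
  from measurable_compose[OF measurable_walk this]
  have "{\<omega>\<in>space M. \<exists>n. exits_upward (\<lambda>i. X i \<omega>) h n} \<in> sets M"
    by (simp add: pred_def)
  moreover have "event2 r h \<longleftrightarrow> (\<exists>n. exits_upward r h n)" for r
    using event2_len2_iff[OF h] by blast
  ultimately show ?thesis by simp
qed

lemma emeasure_event1:
  assumes h: "h > 0"
  shows "emeasure M {\<omega>\<in>space M. event1 (\<lambda>i. X i \<omega>) h}
    = conditioning_factor h * emeasure M {\<omega>\<in>space M. event2 (\<lambda>i. X i \<omega>) h}"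
proof -
  let ?S = "\<lambda>n. space (PiM {0..n} (\<lambda>_. borel :: real measure))"
  let ?E1 = "\<lambda>n. {\<omega>\<in>space M. event1 (\<lambda>i. X i \<omega>) h \<and> len1 (\<lambda>i. X i \<omega>) h = n
                 \<and> restrict (path1 (\<lambda>i. X i \<omega>) h) {0..n} \<in> ?S n}"
  let ?E2 = "\<lambda>n. {\<omega>\<in>space M. event2 (\<lambda>i. X i \<omega>) h \<and> len2 (\<lambda>i. X i \<omega>) h = n
                 \<and> restrict (path2 (\<lambda>i. X i \<omega>)) {0..n} \<in> ?S n}"
  have S: "?S n \<in> sets (PiM {0..n} (\<lambda>_. borel))" "restrict f {0..n} \<in> ?S n" for n and f :: "nat \<Rightarrow> real"
    by (simp_all add: space_PiM)
  have "{\<omega>\<in>space M. event1 (\<lambda>i. X i \<omega>) h} = (\<Union>n. ?E1 n)"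
    and "{\<omega>\<in>space M. event2 (\<lambda>i. X i \<omega>) h} = (\<Union>n. ?E2 n)"
    using S(2) by blast+
  moreover have "disjoint_family ?E1" and "disjoint_family ?E2"
    unfolding disjoint_family_on_def by blast+
  moreover have "?E1 n \<in> sets M" and "?E2 n \<in> sets M" for n
    using emeasure_event1_path(1)[OF h S(1)] sets_event2_path[OF h S(1)] .
  ultimately show ?thesis
    using emeasure_event1_path(2)[OF h S(1)]
    by (simp add: suminf_emeasure[symmetric] image_subset_iff)
qed

lemma prob_all_above:
  "prob {\<omega>\<in>space M. \<forall>i\<in>{1..int N}. c < X i \<omega>} = prob {\<omega>\<in>space M. c < X 0 \<omega>} ^ N"
proof (cases "N = 0")
  case False
  have each: "prob (X i -` {c<..} \<inter> space M) = prob {\<omega>\<in>space M. c < X 0 \<omega>}" for i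
  proof -
    have "prob (X i -` {c<..} \<inter> space M) = measure (distr M borel (X i)) {c<..}"
      by (rule measure_distr[symmetric]) auto
    also have "\<dots> = measure (distr M borel (X 0)) {c<..}" by (simp only: ident[of i])
    also have "\<dots> = prob (X 0 -` {c<..} \<inter> space M)" by (rule measure_distr) auto
    finally show ?thesis by (simp add: vimage_def Int_def conj_commute)
  qed
  have "prob (\<Inter>i\<in>{1..int N}. X i -` {c<..} \<inter> space M) = (\<Prod>i\<in>{1..int N}. prob (X i -` {c<..} \<inter> space M))"
    by (rule indep_varsD[OF indep]) (use False in auto)
  moreover have "(\<Inter>i\<in>{1..int N}. X i -` {c<..} \<inter> space M) = {\<omega>\<in>space M. \<forall>i\<in>{1..int N}. c < X i \<omega>}"
    using False by auto
  ultimately show ?thesis by (simp add: each)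
qed (simp add: prob_space)

lemma emeasure_reaches_before_negative_pos:
  assumes pos: "0 < prob {\<omega>\<in>space M. 0 < X 0 \<omega>}" and h: "h > 0"
  shows "0 < emeasure M {\<omega>\<in>space M. reaches_before_negative (\<lambda>i. X i \<omega>) h}"
proof -
  obtain c where c: "0 < c" "0 < prob {\<omega>\<in>space M. c < X 0 \<omega>}"
    using exists_pos_level[OF measurable_X pos] .
  obtain N :: nat where N: "h < real N * c" using reals_Archimedean3[OF c(1)] by blast
  let ?A = "{\<omega>\<in>space M. \<forall>i\<in>{1..int N}. c < X i \<omega>}"
  have "?A \<subseteq> {\<omega>\<in>space M. reaches_before_negative (\<lambda>i. X i \<omega>) h}"
  proof safe
    fix \<omega> assume \<omega>: "\<omega> \<in> space M" "\<forall>i\<in>{1..int N}. c < X i \<omega>"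
    have V: "Vw (\<lambda>i. X i \<omega>) (int x) = (\<Sum>i\<in>{0<..int x}. X i \<omega>)" for x
      using Vw_diff[of 0 "int x" "\<lambda>i. X i \<omega>"] by simp
    have "real N * c = (\<Sum>i\<in>{0<..int N}. c)" by simp
    also have "\<dots> \<le> Vw (\<lambda>i. X i \<omega>) (int N)"
      unfolding V using \<omega>(2) by (intro sum_mono) (simp add: less_imp_le)
    finally have "h \<le> Vw (\<lambda>i. X i \<omega>) (int N)" using N by simp
    moreover have "0 \<le> Vw (\<lambda>i. X i \<omega>) (int x)" if "x \<le> N" for x
    proof (unfold V, intro sum_nonneg)
      fix i assume "i \<in> {0<..int x}"
      then have "c < X i \<omega>" using \<omega>(2) that by auto
      then show "0 \<le> X i \<omega>" using c(1) by linarith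
    qed
    ultimately show "reaches_before_negative (\<lambda>i. X i \<omega>) h"
      unfolding reaches_before_negative_def by blast
  qed
  then have "emeasure M ?A \<le> emeasure M {\<omega>\<in>space M. reaches_before_negative (\<lambda>i. X i \<omega>) h}"
    using measurable_compose[OF measurable_walk measurable_reaches_before_negative_0]
    by (intro emeasure_mono) (simp_all add: pred_def)
  moreover have "0 < emeasure M ?A"
    using c(2) by (simp add: emeasure_eq_measure prob_all_above)
  ultimately show ?thesis by order
qed

lemma conditioning_factor_pos:
  assumes "0 < prob {\<omega>\<in>space M. 0 < X 0 \<omega>}" and "h > 0"
  shows "0 < conditioning_factor h"
proof -
  have "{\<omega>\<in>space M. Vup (\<lambda>i. X i \<omega>) 0 < h} = space M" using assms(2) by (simp add: Vup_0)
  then have "0 < (\<Sum>t. emeasure M {\<omega>\<in>space M. Vup (\<lambda>i. X i \<omega>) t < h})"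
    by (subst suminf_pos_iff) (auto intro!: exI[of _ 0] simp: emeasure_space_1)
  then show ?thesis
    unfolding conditioning_factor_def using emeasure_reaches_before_negative_pos[OF assms]
    by (simp add: ennreal_zero_less_mult_iff)
qed

lemma conditional_law_eq:
  assumes pos: "0 < prob {\<omega>\<in>space M. 0 < X 0 \<omega>}" and h: "h > 0"
    and B: "B \<in> sets (PiM {0..n} (\<lambda>_. borel))"
  shows "measure M {\<omega> \<in> space M. event1 (\<lambda>i. X i \<omega>) h \<and> len1 (\<lambda>i. X i \<omega>) h = n
                  \<and> restrict (path1 (\<lambda>i. X i \<omega>) h) {0..n} \<in> B}
      / measure M {\<omega> \<in> space M. event1 (\<lambda>i. X i \<omega>) h}
    = measure M {\<omega> \<in> space M. event2 (\<lambda>i. X i \<omega>) h \<and> len2 (\<lambda>i. X i \<omega>) h = n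
                  \<and> restrict (path2 (\<lambda>i. X i \<omega>)) {0..n} \<in> B}
      / measure M {\<omega> \<in> space M. event2 (\<lambda>i. X i \<omega>) h}"
  by (rule measure_ratio_eq[OF emeasure_event1_path(2)[OF h B] emeasure_event1[OF h] _ sets_event2[OF h]
        conditioning_factor_pos[OF pos h]]) blast

end

theorem proposition5p1:
  fixes M :: "'a measure" and X :: "int \<Rightarrow> 'a \<Rightarrow> real" and h :: real
  assumes "prob_space M"
    and "prob_space.indep_vars M (\<lambda>_. borel) X UNIV"
    and "\<And>i. distr M borel (X i) = distr M borel (X 0)"
    and "measure M {\<omega> \<in> space M. X 0 \<omega> > 0} > 0"
    and "measure M {\<omega> \<in> space M. X 0 \<omega> < 0} > 0"
    and "h > 0"
  shows "\<forall>n::nat. \<forall>B \<in> sets (PiM {0..n} (\<lambda>_. borel)).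
    measure M {\<omega> \<in> space M. event1 (\<lambda>i. X i \<omega>) h \<and> len1 (\<lambda>i. X i \<omega>) h = n
                  \<and> restrict (path1 (\<lambda>i. X i \<omega>) h) {0..n} \<in> B}
      / measure M {\<omega> \<in> space M. event1 (\<lambda>i. X i \<omega>) h}
    = measure M {\<omega> \<in> space M. event2 (\<lambda>i. X i \<omega>) h \<and> len2 (\<lambda>i. X i \<omega>) h = n
                  \<and> restrict (path2 (\<lambda>i. X i \<omega>)) {0..n} \<in> B}
      / measure M {\<omega> \<in> space M. event2 (\<lambda>i. X i \<omega>) h}"
proof -
  interpret iid_walk M X
    using assms(1-3) by (simp add: iid_walk_def iid_walk_axioms_def)
  show ?thesis using conditional_law_eq[OF assms(4,6)] by blast
qed

end
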